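(* Let $\alpha=\frac{1+\sqrt5}{2}$. For $a\in\mathbb{C}$ with $a\neq 0$ and $|a|<1$, consider the Blaschke product $B_a(z)=z\,\frac{z-a}{1-\overline{a}z}$. There are infinitely many values of $a$ (with $a\neq0$, $|a|<1$) such that there exists a line segment $[z_1,z_2]$ with endpoints $z_1,z_2$ on the unit circle $\partial\mathbb{D}$ which is divided by $a$ in the golden ratio. Furthermore, for a fixed such $a$, the number of line segments with endpoints on the unit circle that are divided by $a$ in the golden ratio is at most two.
   Context: $\mathbb{D}$ denotes the open unit disc and $\partial\mathbb{D}$ the unit circle. The golden ratio is $\alpha=\frac{1+\sqrt5}{2}$, the positive root of $x^2-x-1=0$. A point $a$ on a line segment $[z_1,z_2]$ divides it in the golden ratio if the ratio of the length of the longer part to the length of the shorter part equals $\alpha$, e.g. $\frac{|z_2-a|}{|z_1-a|}=\alpha$. (For any chord $[z_1,z_2]$ of the unit circle through the nonzero zero $a$ of $B_a$ one has $B_a(z_1)=B_a(z_2)$.) *)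

theory Defs
  imports "HOL-Analysis.Analysis"
begin

definition golden_ratio :: real where
  "golden_ratio = (1 + sqrt 5) / 2"

definition blaschke :: "complex \<Rightarrow> complex \<Rightarrow> complex" where
  "blaschke a z = z * (z - a) / (1 - cnj a * z)"

definition golden_divides :: "complex \<Rightarrow> complex \<Rightarrow> complex \<Rightarrow> bool" where
  "golden_divides a z1 z2 \<longleftrightarrow> a \<in> closed_segment z1 z2 \<and>
     (cmod (z2 - a) = golden_ratio * cmod (z1 - a) \<or> cmod (z1 - a) = golden_ratio * cmod (z2 - a))"

definition golden_chords :: "complex \<Rightarrow> complex set set" where
  "golden_chords a = {{z1, z2} | z1 z2. cmod z1 = 1 \<and> cmod z2 = 1 \<and> golden_divides a z1 z2}"

end

theory Submission
  imports Defs
begin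

text \<open>With s = 1/(1 + golden_ratio), a point a divides a chord [z1, z2] in the golden ratio
  iff a = (1 - s) z1 + s z2 up to swapping the endpoints. Hence every circle |z| = t with
  0 < t = 1 - 2s < 1 consists of admissible points a (take z1 = a/t, z2 = -a/t). Conversely,
  for fixed a the endpoint z1 lies on the unit circle and on the circle |z - a/(1 - s)| = s/(1 - s),
  and it determines z2; two distinct circles meet in at most two points.\<close>

lemma golden_ratio_gt_1: "golden_ratio > 1"
proof -
  have "sqrt 5 > 1" by (simp add: real_less_rsqrt)
  thus ?thesis unfolding golden_ratio_def by simp
qed

lemma finite_card_le_if_subset_image:
  assumes "A \<subseteq> f ` B" and "finite B"
  shows "finite A \<and> card A \<le> card B"
  using assms finite_surj surj_card_le by blast

lemma infinite_sphere_complex: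
  assumes "r > 0"
  shows "infinite (sphere (c :: complex) r)"
proof
  assume "finite (sphere c r)"
  moreover have "connected (sphere c r)" by (simp add: connected_sphere)
  ultimately have "sphere c r = {} \<or> (\<exists>x. sphere c r = {x})"
    using connected_finite_iff_sing by blast
  moreover have "c + of_real r \<in> sphere c r" "c - of_real r \<in> sphere c r"
    using assms by (simp_all add: dist_norm)
  moreover have "c + of_real r \<noteq> c - of_real r" using assms by simp
  ultimately show False by (metis empty_iff singletonD)
qed

lemma unit_circle_inter_vertical_line:
  "{w :: complex. cmod w = 1 \<and> Re w = k} \<subseteq> {Complex k (sqrt (1 - k\<^sup>2)), Complex k (- sqrt (1 - k\<^sup>2))}"
proof
  fix w :: complex assume "w \<in> {w. cmod w = 1 \<and> Re w = k}"
  hence w: "cmod w = 1" "Re w = k" by auto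
  have "Re w ^ 2 + Im w ^ 2 = 1" using w(1) by (metis cmod_power2 power_one)
  hence "Im w ^ 2 = 1 - k\<^sup>2" using w(2) by simp
  hence "Im w = sqrt (1 - k\<^sup>2) \<or> Im w = - sqrt (1 - k\<^sup>2)"
    by (metis real_sqrt_abs abs_if minus_minus)
  thus "w \<in> {Complex k (sqrt (1 - k\<^sup>2)), Complex k (- sqrt (1 - k\<^sup>2))}"
    using w(2) by (auto simp: complex_eq_iff)
qed

lemma unit_circle_inter_circle:
  fixes b :: complex and c :: real
  assumes "b \<noteq> 0"
  shows "finite {z. cmod z = 1 \<and> cmod (z - b) = c} \<and> card {z. cmod z = 1 \<and> cmod (z - b) = c} \<le> 2"
proof -
  define u where "u = b / of_real (cmod b)"
  define k where "k = (1 + (cmod b)\<^sup>2 - c\<^sup>2) / (2 * cmod b)"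
  let ?W = "{w :: complex. cmod w = 1 \<and> Re w = k}"
  have nb: "cmod b > 0" using assms by simp
  have uu: "u * cnj u = 1" unfolding u_def using nb
    by (simp add: complex_norm_square[symmetric] field_simps power2_eq_square)
  have cu: "cmod u = 1" unfolding u_def using nb by (simp add: norm_divide)
  txt \<open>Rotating by cnj u moves b onto the positive real axis, where the radical axis of the
    two circles becomes the vertical line Re w = k.\<close>
  have sub: "{z. cmod z = 1 \<and> cmod (z - b) = c} \<subseteq> (\<lambda>w. u * w) ` ?W"
  proof
    fix z assume "z \<in> {z. cmod z = 1 \<and> cmod (z - b) = c}"
    hence z: "cmod z = 1" "cmod (z - b) = c" by auto
    define w where "w = cnj u * z"
    have "u * w = z" unfolding w_def using uu by (metis mult.assoc mult_1)
    moreover have "cmod w = 1" unfolding w_def using z cu by (simp add: norm_mult)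
    moreover have "Re w = k"
    proof -
      have e1: "Re z ^ 2 + Im z ^ 2 = 1" using z(1) by (metis cmod_power2 power_one)
      have e2: "(Re z - Re b) ^ 2 + (Im z - Im b) ^ 2 = c\<^sup>2" using z(2)
        by (metis cmod_power2 minus_complex.simps)
      have e3: "Re b ^ 2 + Im b ^ 2 = (cmod b)\<^sup>2" by (simp add: cmod_power2)
      have "Re w = (Re b * Re z + Im b * Im z) / cmod b"
        unfolding w_def u_def by (simp add: add_divide_distrib)
      also have "Re b * Re z + Im b * Im z = (1 + (cmod b)\<^sup>2 - c\<^sup>2) / 2"
        using e1 e2 e3 by (simp add: power2_diff algebra_simps)
      finally show ?thesis unfolding k_def by simp
    qed
    ultimately show "z \<in> (\<lambda>w. u * w) ` ?W" by auto
  qed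
  have fin: "finite ?W"
    by (rule finite_subset[OF unit_circle_inter_vertical_line]) simp
  have "card ?W \<le> 2"
    by (rule order_trans[OF card_mono[OF _ unit_circle_inter_vertical_line]])
      (simp_all add: card_insert_le_m1)
  with finite_card_le_if_subset_image[OF sub fin] show ?thesis by linarith
qed

lemma norm_diff_point_on_segment:
  fixes z1 z2 :: "'a :: real_normed_vector"
  assumes "a = (1 - u) *\<^sub>R z1 + u *\<^sub>R z2" and "0 \<le> u" and "u \<le> 1"
  shows "norm (z1 - a) = u * dist z1 z2" and "norm (z2 - a) = (1 - u) * dist z1 z2"
proof -
  have "z1 - a = u *\<^sub>R (z1 - z2)" "z2 - a = (1 - u) *\<^sub>R (z2 - z1)"
    using assms(1) by (simp_all add: algebra_simps)
  thus "norm (z1 - a) = u * dist z1 z2" "norm (z2 - a) = (1 - u) * dist z1 z2"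
    using assms(2,3) by (simp_all add: dist_norm norm_minus_commute)
qed

lemma golden_divides_if_convex_comb:
  assumes "a = (1 - u) *\<^sub>R z1 + u *\<^sub>R z2" and "u = 1 / (1 + golden_ratio)"
  shows "golden_divides a z1 z2"
proof -
  have u: "0 \<le> u" "u \<le> 1"
    using assms(2) golden_ratio_gt_1 by auto
  have golden: "1 - u = golden_ratio * u"
    using assms(2) golden_ratio_gt_1 by (simp add: field_simps)
  have "a \<in> closed_segment z1 z2"
    using assms(1) u(1,2) unfolding closed_segment_def by blast
  moreover have "cmod (z2 - a) = golden_ratio * cmod (z1 - a)"
    using norm_diff_point_on_segment[OF assms(1) u] golden by simp
  ultimately show ?thesis unfolding golden_divides_def by blast
qed

lemma convex_comb_if_golden_divides:
  assumes "golden_divides a z1 z2" and "z1 \<noteq> z2"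
  defines "s \<equiv> 1 / (1 + golden_ratio)"
  shows "a = (1 - s) *\<^sub>R z1 + s *\<^sub>R z2 \<or> a = (1 - s) *\<^sub>R z2 + s *\<^sub>R z1"
proof -
  obtain u where u: "0 \<le> u" "u \<le> 1" and a: "a = (1 - u) *\<^sub>R z1 + u *\<^sub>R z2"
    and ratio: "cmod (z2 - a) = golden_ratio * cmod (z1 - a)
                \<or> cmod (z1 - a) = golden_ratio * cmod (z2 - a)"
    using assms(1) unfolding golden_divides_def closed_segment_def by auto
  have L: "dist z1 z2 > 0" using assms(2) by simp
  note d = norm_diff_point_on_segment[OF a u]
  from ratio have "1 - u = golden_ratio * u \<or> u = golden_ratio * (1 - u)"
    using L unfolding d by auto
  hence "u = s \<or> u = 1 - s"
    unfolding s_def using golden_ratio_gt_1 by (auto simp: field_simps)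
  thus ?thesis using a by (auto simp: add.commute)
qed

lemma infinite_golden_points:
  "infinite {a :: complex. a \<noteq> 0 \<and> cmod a < 1 \<and>
     (\<exists>z1 z2. cmod z1 = 1 \<and> cmod z2 = 1 \<and> golden_divides a z1 z2)}"
proof -
  define s where "s = 1 / (1 + golden_ratio)"
  define t where "t = 1 - 2 * s"
  have t: "0 < t" "t < 1" unfolding t_def s_def using golden_ratio_gt_1 by auto
  have "sphere 0 t \<subseteq> {a :: complex. a \<noteq> 0 \<and> cmod a < 1 \<and>
          (\<exists>z1 z2. cmod z1 = 1 \<and> cmod z2 = 1 \<and> golden_divides a z1 z2)}"
  proof
    fix a :: complex assume "a \<in> sphere 0 t"
    hence na: "cmod a = t" by simp
    define w where "w = a / of_real t"
    have w: "cmod w = 1" unfolding w_def using na t by (simp add: norm_divide)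
    have "a = t *\<^sub>R w" unfolding w_def using t(1) by (simp add: scaleR_conv_of_real)
    also have "\<dots> = (1 - s) *\<^sub>R w + s *\<^sub>R (- w)"
      unfolding t_def by (simp add: scaleR_conv_of_real algebra_simps)
    finally have "golden_divides a w (- w)"
      using golden_divides_if_convex_comb s_def by blast
    moreover have "a \<noteq> 0" "cmod a < 1" "cmod (- w) = 1" using na t w by auto
    ultimately show "a \<in> {a. a \<noteq> 0 \<and> cmod a < 1 \<and>
          (\<exists>z1 z2. cmod z1 = 1 \<and> cmod z2 = 1 \<and> golden_divides a z1 z2)}"
      using w by blast
  qed
  thus ?thesis using infinite_sphere_complex[OF t(1)] finite_subset by blast
qed

lemma golden_chords_bound:
  fixes a :: complex
  assumes "a \<noteq> 0" and "cmod a < 1"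
  shows "finite (golden_chords a) \<and> card (golden_chords a) \<le> 2"
proof -
  define s where "s = 1 / (1 + golden_ratio)"
  have s: "0 < s" "s < 1" unfolding s_def using golden_ratio_gt_1 by auto
  define b where "b = a / of_real (1 - s)"
  define endpoint where "endpoint = (\<lambda>z. (a - of_real (1 - s) * z) / of_real s)"
  let ?Z = "{z. cmod z = 1 \<and> cmod (z - b) = s / (1 - s)}"
  have chord_in_image: "{z1, z2} \<in> (\<lambda>z. {z, endpoint z}) ` ?Z"
    if z: "cmod z1 = 1" "cmod z2 = 1" and a: "a = (1 - s) *\<^sub>R z1 + s *\<^sub>R z2" for z1 z2
  proof -
    have a': "a = of_real (1 - s) * z1 + of_real s * z2"
      using a by (simp add: scaleR_conv_of_real)
    have "endpoint z1 = z2" unfolding endpoint_def a' using s by (simp add: field_simps)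
    moreover have "z1 - b = - (of_real s * z2) / of_real (1 - s)"
      unfolding b_def a' using s by (simp add: field_simps)
    hence "cmod (z1 - b) = s / (1 - s)"
      using s z by (simp add: norm_divide norm_mult abs_of_pos del: of_real_diff)
    ultimately show ?thesis using z by auto
  qed
  have sub: "golden_chords a \<subseteq> (\<lambda>z. {z, endpoint z}) ` ?Z"
  proof
    fix C assume "C \<in> golden_chords a"
    then obtain z1 z2 where C: "C = {z1, z2}" and z: "cmod z1 = 1" "cmod z2 = 1"
      and gd: "golden_divides a z1 z2" unfolding golden_chords_def by auto
    have "z1 \<noteq> z2"
      using gd assms(2) z unfolding golden_divides_def by auto
    with gd have "a = (1 - s) *\<^sub>R z1 + s *\<^sub>R z2 \<or> a = (1 - s) *\<^sub>R z2 + s *\<^sub>R z1"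
      unfolding s_def by (rule convex_comb_if_golden_divides)
    thus "C \<in> (\<lambda>z. {z, endpoint z}) ` ?Z"
      using chord_in_image[OF z] chord_in_image[OF z(2,1)] C by (auto simp: insert_commute)
  qed
  have "b \<noteq> 0" unfolding b_def using assms(1) s by simp
  hence "finite ?Z \<and> card ?Z \<le> 2" by (rule unit_circle_inter_circle)
  with finite_card_le_if_subset_image[OF sub] show ?thesis by linarith
qed

theorem theorem1:
  shows "infinite {a :: complex. a \<noteq> 0 \<and> cmod a < 1 \<and>
            (\<exists>z1 z2. cmod z1 = 1 \<and> cmod z2 = 1 \<and> golden_divides a z1 z2)}
     \<and> (\<forall>a :: complex. a \<noteq> 0 \<and> cmod a < 1 \<and>
            (\<exists>z1 z2. cmod z1 = 1 \<and> cmod z2 = 1 \<and> golden_divides a z1 z2)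
          \<longrightarrow> finite (golden_chords a) \<and> card (golden_chords a) \<le> 2)"
  using infinite_golden_points golden_chords_bound by blast

end
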